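(* Let $k\ge1$ and $\varepsilon>0$. Suppose $\mathcal{A}$ is a quantum algorithm making $T$ queries to an unknown $n$-qubit unitary (and/or its inverse) which is a $(k,\sqrt{\varepsilon/2})$-quantum junta tester, i.e. for every $U\in\mathcal{U}_N$ it outputs, with probability at least $9/10$, "Yes" if $U$ is a quantum $k$-junta and "No" if $U$ is $\sqrt{\varepsilon/2}$-far from every quantum $k$-junta. Then $\mathcal{A}$, run with the oracle $U_f=\mathrm{diag}\big((-1)^{f(x)}\big)_{x\in\{0,1\}^n}$, is a $T$-query $(k,\varepsilon)$-classical junta tester: for every Boolean function $f:\{0,1\}^n\to\{0,1\}$ it outputs, with probability at least $9/10$, "Yes" if $f$ is a $k$-junta and "No" if $f$ is $\varepsilon$-far from every $k$-junta.
   Context: $N=2^n$, $\mathcal{U}_N$ is the set of $N\times N$ unitaries. A unitary $U\in\mathcal{U}_N$ is a quantum $k$-junta if $U=V_S\otimes I_{\overline{S}}$ for some $S\subseteq[n]$ with $|S|=k$ and some $V_S\in\mathcal{U}_{2^k}$ acting on the qubits in $S$. For $A,B\in\mathbb{C}^{N\times N}$, $\mathrm{dist}(A,B):=\min_{\theta\in[0,2\pi)}\frac{1}{\sqrt{2N}}\|e^{i\theta}A-B\|$ with $\|\cdot\|$ the Frobenius norm; $U$ is $\delta$-far from every quantum $k$-junta if $\mathrm{dist}(U,V)\ge\delta$ for all quantum $k$-juntas $V$. A Boolean function $f:\{0,1\}^n\to\{0,1\}$ is a $k$-junta if $f(x)=g(x_{i_1},\dots,x_{i_k})$ for some $g:\{0,1\}^k\to\{0,1\}$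 and fixed indices $i_1,\dots,i_k$; for Boolean functions $\mathrm{dist}(f,g):=\Pr_{x}[f(x)\neq g(x)]$ with $x$ uniform on $\{0,1\}^n$, and $f$ is $\varepsilon$-far from every $k$-junta if $\mathrm{dist}(f,g)\ge\varepsilon$ for every $k$-junta $g$. $U_f$ is the diagonal $N\times N$ matrix with diagonal entries $(-1)^{f(x)}$. *)

theory Defs
  imports Complex_Main
begin

text \<open>Computational basis states of qubits indexed by a set S: bit strings x with
  x i = False outside S. The n-qubit basis {0,1}^n is basis_on {..<n}.\<close>
definition basis_on :: "nat set \<Rightarrow> (nat \<Rightarrow> bool) set" where
  "basis_on S = {x. \<forall>i. i \<notin> S \<longrightarrow> \<not> x i}"

abbreviation bstates :: "nat \<Rightarrow> (nat \<Rightarrow> bool) set" where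
  "bstates n \<equiv> basis_on {..<n}"

definition restr :: "nat set \<Rightarrow> (nat \<Rightarrow> bool) \<Rightarrow> (nat \<Rightarrow> bool)" where
  "restr S x = (\<lambda>i. if i \<in> S then x i else False)"

type_synonym qmat = "(nat \<Rightarrow> bool) \<Rightarrow> (nat \<Rightarrow> bool) \<Rightarrow> complex"

definition unitary_on :: "(nat \<Rightarrow> bool) set \<Rightarrow> qmat \<Rightarrow> bool" where
  "unitary_on B U \<longleftrightarrow>
     (\<forall>x\<in>B. \<forall>y\<in>B. (\<Sum>z\<in>B. cnj (U z x) * U z y) = (if x = y then 1 else 0))"

text \<open>Quantum k-junta: U = V_S \<otimes> I on the complement, with |S| = k.\<close>
definition quantum_junta :: "nat \<Rightarrow> nat \<Rightarrow> qmat \<Rightarrow> bool" where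
  "quantum_junta n k U \<longleftrightarrow> unitary_on (bstates n) U \<and>
     (\<exists>S V. S \<subseteq> {..<n} \<and> card S = k \<and> unitary_on (basis_on S) V \<and>
        (\<forall>x\<in>bstates n. \<forall>y\<in>bstates n.
           U x y = V (restr S x) (restr S y) *
                   (if restr ({..<n} - S) x = restr ({..<n} - S) y then 1 else 0)))"

definition frob_norm :: "nat \<Rightarrow> qmat \<Rightarrow> real" where
  "frob_norm n A = sqrt (\<Sum>x\<in>bstates n. \<Sum>y\<in>bstates n. (cmod (A x y))\<^sup>2)"

definition qdist :: "nat \<Rightarrow> qmat \<Rightarrow> qmat \<Rightarrow> real" where
  "qdist n A B = (INF \<theta>\<in>{0..<2*pi}.
      frob_norm n (\<lambda>x y. exp (\<i> * of_real \<theta>) * A x y - B x y) / sqrt (2 * 2 ^ n))"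

definition far_from_qjuntas :: "nat \<Rightarrow> nat \<Rightarrow> real \<Rightarrow> qmat \<Rightarrow> bool" where
  "far_from_qjuntas n k \<delta> U \<longleftrightarrow> (\<forall>V. quantum_junta n k V \<longrightarrow> qdist n U V \<ge> \<delta>)"

definition classical_junta :: "nat \<Rightarrow> nat \<Rightarrow> ((nat \<Rightarrow> bool) \<Rightarrow> bool) \<Rightarrow> bool" where
  "classical_junta n k f \<longleftrightarrow>
     (\<exists>is (g :: bool list \<Rightarrow> bool). length is = k \<and> set is \<subseteq> {..<n} \<and>
        (\<forall>x\<in>bstates n. f x = g (map x is)))"

definition bdist :: "nat \<Rightarrow> ((nat \<Rightarrow> bool) \<Rightarrow> bool) \<Rightarrow> ((nat \<Rightarrow> bool) \<Rightarrow> bool) \<Rightarrow> real" where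
  "bdist n f g = real (card {x\<in>bstates n. f x \<noteq> g x}) / 2 ^ n"

definition far_from_cjuntas :: "nat \<Rightarrow> nat \<Rightarrow> real \<Rightarrow> ((nat \<Rightarrow> bool) \<Rightarrow> bool) \<Rightarrow> bool" where
  "far_from_cjuntas n k \<epsilon> f \<longleftrightarrow> (\<forall>g. classical_junta n k g \<longrightarrow> bdist n f g \<ge> \<epsilon>)"

definition phase_oracle :: "((nat \<Rightarrow> bool) \<Rightarrow> bool) \<Rightarrow> qmat" where
  "phase_oracle f = (\<lambda>x y. if x = y then (if f x then -1 else 1) else 0)"

end

(*
  A classical k-junta f yields the diagonal quantum k-junta U_f.  Conversely, let
  V = V_S \<otimes> I be any quantum k-junta and |c| = 1.  Then
  ||c U_f - V||^2 = 2N - 2 Re (c Z) with Z = \<Sum>_x (-1)^f(x) cnj (V x x), and V x x = V_S x_S x_S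
  has modulus at most 1 and depends only on x_S.  Grouping Z by the fibres of x \<mapsto> x_S gives
  |Z| \<le> \<Sum>_a |\<Sum>_{x_S = a} (-1)^f(x)| = N - 2 |{x. f x \<noteq> g x}|, where g is the majority
  vote of f on each fibre, itself a classical k-junta.  So if f is \<epsilon>-far from all k-juntas,
  ||c U_f - V||^2 \<ge> 4 \<epsilon> N, i.e. dist(U_f, V) \<ge> sqrt (2 \<epsilon>) \<ge> sqrt (\<epsilon> / 2).
*)

theory Submission
  imports Defs
begin

lemma bij_betw_Pow_basis_on: "bij_betw (\<lambda>A i. i \<in> A) (Pow S) (basis_on S)"
proof (rule bij_betwI')
  fix x assume "x \<in> basis_on S"
  then have "{i. x i} \<in> Pow S" "x = (\<lambda>i. i \<in> {i. x i})" by (auto simp: basis_on_def)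
  then show "\<exists>A\<in>Pow S. x = (\<lambda>i. i \<in> A)" by blast
qed (auto simp: basis_on_def fun_eq_iff)

lemma finite_basis_on: "finite S \<Longrightarrow> finite (basis_on S)"
  using bij_betw_finite[OF bij_betw_Pow_basis_on] by auto

lemma card_basis_on: "finite S \<Longrightarrow> card (basis_on S) = 2 ^ card S"
  using bij_betw_same_card[OF bij_betw_Pow_basis_on] card_Pow by metis

lemma restr_in_basis_on: "restr S x \<in> basis_on S"
  by (simp add: restr_def basis_on_def)

lemma bstates_eq_iff_restr_eq:
  assumes "x \<in> bstates n" and "y \<in> bstates n"
  shows "x = y \<longleftrightarrow> restr S x = restr S y \<and> restr ({..<n} - S) x = restr ({..<n} - S) y"
proof
  assume "restr S x = restr S y \<and> restr ({..<n} - S) x = restr ({..<n} - S) y"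
  then have "x i = y i" if "i \<in> S \<or> i < n" for i
    using that by (auto simp: restr_def fun_eq_iff split: if_splits)
  moreover have "x i = y i" if "i \<notin> S" "\<not> i < n" for i
    using that assms by (simp add: basis_on_def)
  ultimately show "x = y" by blast
qed simp

lemma map_eq_iff_restr_eq:
  assumes "set is = S"
  shows "map x is = map y is \<longleftrightarrow> restr S x = restr S y"
  using assms by (auto simp: restr_def fun_eq_iff)

lemma unitary_on_diag:
  assumes "finite B" and "\<forall>x\<in>B. cmod (d x) = 1"
  shows "unitary_on B (\<lambda>x y. if x = y then d x else 0)"
  unfolding unitary_on_def
proof (intro ballI)
  fix x y assume "x \<in> B" "y \<in> B"
  have "cnj (d x) * d x = 1"
    using \<open>x \<in> B\<close> assms(2) by (metis complex_norm_square mult.commute of_real_1 power_one)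
  then have "(\<Sum>z\<in>B. cnj (if z = x then d z else 0) * (if z = y then d z else 0))
           = (\<Sum>z\<in>B. if z = x then (if x = y then 1 else 0) else 0)"
    by (intro sum.cong) auto
  also have "\<dots> = (if x = y then 1 else 0)" using \<open>x \<in> B\<close> assms(1) by simp
  finally show "(\<Sum>z\<in>B. cnj (if z = x then d z else 0) * (if z = y then d z else 0))
              = (if x = y then 1 else 0)" .
qed

lemma unitary_on_column_norm:
  assumes "unitary_on B U" and "y \<in> B"
  shows "(\<Sum>x\<in>B. (cmod (U x y))\<^sup>2) = 1"
proof -
  have "(\<Sum>x\<in>B. cnj (U x y) * U x y) = 1"
    using assms unfolding unitary_on_def by auto
  moreover have "(\<Sum>x\<in>B. cnj (U x y) * U x y) = complex_of_real (\<Sum>x\<in>B. (cmod (U x y))\<^sup>2)"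
    by (simp only: of_real_sum complex_norm_square mult.commute)
  ultimately have "complex_of_real (\<Sum>x\<in>B. (cmod (U x y))\<^sup>2) = 1"
    by simp
  then show ?thesis by (simp only: of_real_eq_1_iff)
qed

lemma unitary_on_entry_le_1:
  assumes "finite B" and "unitary_on B U" and "x \<in> B" and "y \<in> B"
  shows "cmod (U x y) \<le> 1"
proof -
  have "(cmod (U x y))\<^sup>2 \<le> (\<Sum>z\<in>B. (cmod (U z y))\<^sup>2)"
    using assms by (intro member_le_sum) auto
  then have "(cmod (U x y))\<^sup>2 \<le> 1\<^sup>2"
    using unitary_on_column_norm[OF assms(2,4)] by simp
  then show ?thesis by (rule power2_le_imp_le) simp
qed

lemma cmod_diff_power2: "(cmod (a - b))\<^sup>2 = (cmod a)\<^sup>2 + (cmod b)\<^sup>2 - 2 * Re (a * cnj b)"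
  unfolding cmod_power2 by (simp add: power2_eq_square algebra_simps)

lemma frob_sq_diff_diag_unitary:
  assumes "finite B" and "unitary_on B V" and "cmod c = 1" and "\<forall>x\<in>B. cmod (d x) = 1"
  shows "(\<Sum>x\<in>B. \<Sum>y\<in>B. (cmod (c * (if x = y then d x else 0) - V x y))\<^sup>2)
       = 2 * real (card B) - 2 * Re (c * (\<Sum>x\<in>B. d x * cnj (V x x)))"
proof -
  have row: "(\<Sum>y\<in>B. (cmod (c * (if x = y then d x else 0) - V x y))\<^sup>2)
      = 1 + (\<Sum>y\<in>B. (cmod (V x y))\<^sup>2) - 2 * Re (c * (d x * cnj (V x x)))" if "x \<in> B" for x
  proof -
    have "(\<Sum>y\<in>B. (cmod (c * (if x = y then d x else 0) - V x y))\<^sup>2)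
        = (\<Sum>y\<in>B. (if x = y then 1 - 2 * Re (c * (d x * cnj (V x x))) else 0) + (cmod (V x y))\<^sup>2)"
      using that assms(3,4) by (intro sum.cong) (auto simp: cmod_diff_power2 norm_mult mult.assoc)
    then show ?thesis
      using that assms(1) by (simp add: sum.distrib)
  qed
  have "(\<Sum>x\<in>B. \<Sum>y\<in>B. (cmod (V x y))\<^sup>2) = real (card B)"
    using unitary_on_column_norm[OF assms(2)] by (subst sum.swap) simp
  moreover have "(\<Sum>x\<in>B. Re (c * (d x * cnj (V x x)))) = Re (c * (\<Sum>x\<in>B. d x * cnj (V x x)))"
    by (simp add: sum_distrib_left)
  ultimately show ?thesis
    using row by (simp add: sum.distrib sum_subtractf sum_distrib_left[symmetric])
qed

lemma norm_sum_le_sum_abs_fiber_sums: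
  fixes s :: "'a \<Rightarrow> real" and v :: "'b \<Rightarrow> complex"
  assumes "finite B" and "\<forall>x\<in>B. cmod (v (r x)) \<le> 1"
  shows "cmod (\<Sum>x\<in>B. of_real (s x) * v (r x)) \<le> (\<Sum>a\<in>r ` B. \<bar>\<Sum>x\<in>{x\<in>B. r x = a}. s x\<bar>)"
proof -
  have "(\<Sum>x\<in>B. of_real (s x) * v (r x)) = (\<Sum>a\<in>r ` B. \<Sum>x\<in>{x\<in>B. r x = a}. of_real (s x) * v (r x))"
    by (rule sum.image_gen[OF assms(1)])
  also have "\<dots> = (\<Sum>a\<in>r ` B. of_real (\<Sum>x\<in>{x\<in>B. r x = a}. s x) * v a)"
    by (simp add: sum_distrib_right)
  finally have "cmod (\<Sum>x\<in>B. of_real (s x) * v (r x))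
      \<le> (\<Sum>a\<in>r ` B. cmod (of_real (\<Sum>x\<in>{x\<in>B. r x = a}. s x) * v a))"
    by (simp only: norm_sum)
  also have "\<dots> \<le> (\<Sum>a\<in>r ` B. \<bar>\<Sum>x\<in>{x\<in>B. r x = a}. s x\<bar>)"
  proof (rule sum_mono)
    fix a assume "a \<in> r ` B"
    then have "cmod (v a) \<le> 1" using assms(2) by blast
    then show "cmod (of_real (\<Sum>x\<in>{x\<in>B. r x = a}. s x) * v a) \<le> \<bar>\<Sum>x\<in>{x\<in>B. r x = a}. s x\<bar>"
      by (metis norm_mult norm_of_real abs_ge_zero mult_left_le)
  qed
  finally show ?thesis .
qed

definition sign_bit :: "bool \<Rightarrow> real" where
  "sign_bit b = (if b then -1 else 1)"

lemma sum_abs_fiber_sums_sign_bit: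
  fixes r :: "'a \<Rightarrow> 'b" and f :: "'a \<Rightarrow> bool"
  assumes "finite B"
  defines "F \<equiv> \<lambda>a. \<Sum>x\<in>{x\<in>B. r x = a}. sign_bit (f x)"
  shows "(\<Sum>a\<in>r ` B. \<bar>F a\<bar>) = real (card B) - 2 * real (card {x\<in>B. f x \<noteq> (F (r x) < 0)})"
proof -
  have "\<bar>F a\<bar> = (\<Sum>x\<in>{x\<in>B. r x = a}. sign_bit (F (r x) < 0) * sign_bit (f x))" for a
  proof -
    have "\<bar>F a\<bar> = sign_bit (F a < 0) * F a" by (simp add: sign_bit_def)
    also have "\<dots> = (\<Sum>x\<in>{x\<in>B. r x = a}. sign_bit (F a < 0) * sign_bit (f x))"
      by (simp only: F_def sum_distrib_left)
    also have "\<dots> = (\<Sum>x\<in>{x\<in>B. r x = a}. sign_bit (F (r x) < 0) * sign_bit (f x))"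
      by (intro sum.cong) auto
    finally show ?thesis .
  qed
  then have "(\<Sum>a\<in>r ` B. \<bar>F a\<bar>) = (\<Sum>x\<in>B. sign_bit (F (r x) < 0) * sign_bit (f x))"
    by (simp only: sum.image_gen[OF assms(1), symmetric])
  also have "\<dots> = (\<Sum>x\<in>B. 1 - 2 * (if f x \<noteq> (F (r x) < 0) then 1 else 0))"
    by (intro sum.cong) (auto simp: sign_bit_def)
  also have "\<dots> = real (card B) - 2 * real (card {x\<in>B. f x \<noteq> (F (r x) < 0)})"
    using assms(1) by (simp add: sum_subtractf sum_distrib_left[symmetric] sum.If_cases Int_def)
  finally show ?thesis .
qed

lemma classical_junta_restrE:
  assumes "classical_junta n k f" and "k \<le> n"
  obtains S G where "S \<subseteq> {..<n}" and "card S = k" and "\<forall>x\<in>bstates n. f x = G (restr S x)"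
proof -
  obtain "is" and g :: "bool list \<Rightarrow> bool"
    where len: "length is = k" and sub: "set is \<subseteq> {..<n}" and fg: "\<forall>x\<in>bstates n. f x = g (map x is)"
    using assms(1) unfolding classical_junta_def by blast
  have "card (set is) \<le> k" using len card_length by metis
  then obtain S where S: "set is \<subseteq> S" "S \<subseteq> {..<n}" "card S = k"
    using exists_subset_between[of "set is" k "{..<n}"] assms(2) sub by auto
  have "map (restr S x) is = map x is" for x
    using S(1) by (auto simp: restr_def)
  then have "\<forall>x\<in>bstates n. f x = g (map (restr S x) is)"
    using fg by (simp only:)
  with S show thesis by (intro that[of S "\<lambda>a. g (map a is)"])
qed

lemma classical_junta_restr:
  assumes "S \<subseteq> {..<n}" and "card S = k"
  shows "classical_junta n k (\<lambda>x. G (restr S x))"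
proof -
  define "is" where "is = sorted_list_of_set S"
  have "finite S" using assms(1) finite_subset by blast
  then have set_is: "set is = S" and "length is = k"
    using assms(2) by (simp_all add: is_def)
  define g where "g bs = G (restr S (SOME x. map x is = bs))" for bs
  have "G (restr S x) = g (map x is)" for x
    using someI[of "\<lambda>y. map y is = map x is" x] map_eq_iff_restr_eq[OF set_is]
    by (simp add: g_def)
  with set_is \<open>length is = k\<close> assms(1) show ?thesis
    unfolding classical_junta_def by blast
qed

lemma quantum_junta_diag:
  assumes "S \<subseteq> {..<n}" and "card S = k"
    and "\<forall>a\<in>basis_on S. cmod (e a) = 1" and "\<forall>x\<in>bstates n. d x = e (restr S x)"
  shows "quantum_junta n k (\<lambda>x y. if x = y then d x else 0)"
proof -
  have "finite S" using assms(1) finite_subset by blast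
  have "unitary_on (bstates n) (\<lambda>x y. if x = y then d x else 0)"
    using assms(3,4) restr_in_basis_on by (intro unitary_on_diag finite_basis_on) auto
  moreover have "unitary_on (basis_on S) (\<lambda>a b. if a = b then e a else 0)"
    using assms(3) \<open>finite S\<close> by (intro unitary_on_diag finite_basis_on)
  moreover have "(if x = y then d x else 0) =
      (if restr S x = restr S y then e (restr S x) else 0) *
      (if restr ({..<n} - S) x = restr ({..<n} - S) y then 1 else 0)"
    if "x \<in> bstates n" "y \<in> bstates n" for x y
    using bstates_eq_iff_restr_eq[OF that, of S] assms(4) that by auto
  ultimately show ?thesis
    unfolding quantum_junta_def using assms(1,2) by blast
qed

lemma phase_oracle_diag: "phase_oracle f = (\<lambda>x y. if x = y then of_real (sign_bit (f x)) else 0)"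
  by (simp add: phase_oracle_def sign_bit_def fun_eq_iff)

lemma unitary_on_phase_oracle: "unitary_on (bstates n) (phase_oracle f)"
  unfolding phase_oracle_diag by (intro unitary_on_diag finite_basis_on) (auto simp: sign_bit_def)

lemma quantum_junta_phase_oracle:
  assumes "classical_junta n k f" and "k \<le> n"
  shows "quantum_junta n k (phase_oracle f)"
proof -
  obtain S G where "S \<subseteq> {..<n}" "card S = k" "\<forall>x\<in>bstates n. f x = G (restr S x)"
    using classical_junta_restrE[OF assms] .
  then show ?thesis
    unfolding phase_oracle_diag
    by (intro quantum_junta_diag[where e = "\<lambda>a. of_real (sign_bit (G a))"]) (auto simp: sign_bit_def)
qed

lemma phase_oracle_overlap_le:
  assumes "quantum_junta n k V"
  obtains g where "classical_junta n k g"
    and "cmod (\<Sum>x\<in>bstates n. of_real (sign_bit (f x)) * cnj (V x x)) \<le> 2 ^ n * (1 - 2 * bdist n f g)"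
proof -
  obtain S VS where S: "S \<subseteq> {..<n}" "card S = k" and VS: "unitary_on (basis_on S) VS"
    and V: "\<forall>x\<in>bstates n. \<forall>y\<in>bstates n. V x y = VS (restr S x) (restr S y) *
              (if restr ({..<n} - S) x = restr ({..<n} - S) y then 1 else 0)"
    using assms unfolding quantum_junta_def by blast
  have "finite S" using S(1) finite_subset by blast
  define F where "F a = (\<Sum>x\<in>{x\<in>bstates n. restr S x = a}. sign_bit (f x))" for a
  \<comment> \<open>on each fibre of \<open>restr S\<close>, the value taken by the majority of f\<close>
  define majority where "majority x = (F (restr S x) < 0)" for x
  have "(\<Sum>x\<in>bstates n. of_real (sign_bit (f x)) * cnj (V x x))
      = (\<Sum>x\<in>bstates n. of_real (sign_bit (f x)) * (\<lambda>a. cnj (VS a a)) (restr S x))"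
    using V by (intro sum.cong) auto
  moreover have "\<forall>x\<in>bstates n. cmod (cnj (VS (restr S x) (restr S x))) \<le> 1"
    using VS \<open>finite S\<close> by (auto intro: unitary_on_entry_le_1 finite_basis_on restr_in_basis_on)
  ultimately have "cmod (\<Sum>x\<in>bstates n. of_real (sign_bit (f x)) * cnj (V x x))
      \<le> (\<Sum>a\<in>restr S ` bstates n. \<bar>F a\<bar>)"
    unfolding F_def
    using norm_sum_le_sum_abs_fiber_sums[where v = "\<lambda>a. cnj (VS a a)" and r = "restr S"]
    by (simp add: finite_basis_on)
  also have "\<dots> = 2 ^ n - 2 * real (card {x\<in>bstates n. f x \<noteq> majority x})"
    unfolding F_def majority_def
    by (simp add: sum_abs_fiber_sums_sign_bit finite_basis_on card_basis_on)
  also have "\<dots> = 2 ^ n * (1 - 2 * bdist n f majority)"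
    by (simp add: bdist_def algebra_simps)
  finally show thesis
    using that classical_junta_restr[OF S, of "\<lambda>a. F a < 0"] unfolding majority_def by blast
qed

lemma far_from_qjuntas_phase_oracle:
  assumes "far_from_cjuntas n k \<epsilon> f"
  shows "far_from_qjuntas n k (sqrt (2 * \<epsilon>)) (phase_oracle f)"
  unfolding far_from_qjuntas_def qdist_def
proof (intro allI impI cINF_greatest)
  show "{0..<2 * pi} \<noteq> {}" by simp
  fix V and \<theta> :: real
  assume "quantum_junta n k V"
  define N :: real where "N = 2 ^ n"
  define c where "c = exp (\<i> * of_real \<theta>)"
  define Z where "Z = (\<Sum>x\<in>bstates n. of_real (sign_bit (f x)) * cnj (V x x))"
  obtain g where "classical_junta n k g" and Z_le: "cmod Z \<le> N * (1 - 2 * bdist n f g)"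
    using phase_oracle_overlap_le[OF \<open>quantum_junta n k V\<close>] unfolding Z_def N_def by blast
  have "\<epsilon> \<le> bdist n f g"
    using assms \<open>classical_junta n k g\<close> unfolding far_from_cjuntas_def by blast
  then have "N * (1 - 2 * bdist n f g) \<le> N * (1 - 2 * \<epsilon>)"
    by (intro mult_left_mono) (auto simp: N_def)
  with Z_le have "cmod Z \<le> N * (1 - 2 * \<epsilon>)" by linarith
  have "Re (c * Z) \<le> cmod Z"
    using complex_Re_le_cmod[of "c * Z"] by (simp add: c_def norm_mult)
  have "unitary_on (bstates n) V"
    using \<open>quantum_junta n k V\<close> unfolding quantum_junta_def by blast
  then have "(\<Sum>x\<in>bstates n. \<Sum>y\<in>bstates n. (cmod (c * phase_oracle f x y - V x y))\<^sup>2)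
      = 2 * N - 2 * Re (c * Z)"
    unfolding phase_oracle_diag Z_def N_def
    by (subst frob_sq_diff_diag_unitary) (auto simp: finite_basis_on card_basis_on c_def sign_bit_def)
  then have "4 * \<epsilon> * N \<le> (\<Sum>x\<in>bstates n. \<Sum>y\<in>bstates n. (cmod (c * phase_oracle f x y - V x y))\<^sup>2)"
    using \<open>Re (c * Z) \<le> cmod Z\<close> \<open>cmod Z \<le> N * (1 - 2 * \<epsilon>)\<close> by (simp add: algebra_simps)
  then have "sqrt (2 * \<epsilon>) * sqrt (2 * N) \<le> frob_norm n (\<lambda>x y. c * phase_oracle f x y - V x y)"
    unfolding frob_norm_def by (simp add: real_sqrt_mult[symmetric] real_sqrt_le_mono)
  then show "sqrt (2 * \<epsilon>) \<le>
      frob_norm n (\<lambda>x y. exp (\<i> * of_real \<theta>) * phase_oracle f x y - V x y) / sqrt (2 * 2 ^ n)"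
    unfolding c_def N_def by (simp add: pos_le_divide_eq)
qed

theorem mainTheorem2:
  fixes n k :: nat and \<epsilon> :: real
    and acc :: "qmat \<Rightarrow> real" \<comment> \<open>probability that the algorithm outputs Yes on oracle U\<close>
  assumes "k \<ge> 1" and "k \<le> n" and "\<epsilon> > 0"
    and "\<And>U. 0 \<le> acc U \<and> acc U \<le> 1"
    and tester: "\<And>U. unitary_on (bstates n) U \<Longrightarrow>
           (quantum_junta n k U \<longrightarrow> acc U \<ge> 9/10) \<and>
           (far_from_qjuntas n k (sqrt (\<epsilon> / 2)) U \<longrightarrow> 1 - acc U \<ge> 9/10)"
  shows "\<forall>f. (classical_junta n k f \<longrightarrow> acc (phase_oracle f) \<ge> 9/10) \<and>
             (far_from_cjuntas n k \<epsilon> f \<longrightarrow> 1 - acc (phase_oracle f) \<ge> 9/10)"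
proof (intro allI conjI impI)
  fix f
  note tester_on_oracle = tester[OF unitary_on_phase_oracle]
  show "acc (phase_oracle f) \<ge> 9/10" if "classical_junta n k f"
    using tester_on_oracle quantum_junta_phase_oracle[OF that \<open>k \<le> n\<close>] by blast
  show "1 - acc (phase_oracle f) \<ge> 9/10" if "far_from_cjuntas n k \<epsilon> f"
  proof -
    have "sqrt (\<epsilon> / 2) \<le> sqrt (2 * \<epsilon>)"
      using \<open>\<epsilon> > 0\<close> by simp
    then have "far_from_qjuntas n k (sqrt (\<epsilon> / 2)) (phase_oracle f)"
      using far_from_qjuntas_phase_oracle[OF that] unfolding far_from_qjuntas_def by (meson order_trans)
    then show ?thesis using tester_on_oracle by blast
  qed
qed

end
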